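(* Let $G$ and $H$ be finite simple graphs with disjoint vertex sets, of orders $n_1$ and $n_2$ respectively, and let $u$ be a vertex of $G$. Then \[\mathrm{dp}_{G\vee H}(u)=x^{n_2}\,\mathrm{dp}_G(u)+x^{n_1}\,\mathrm{dp}(H).\]
   Context: For a vertex $v$ of a simple graph $\Gamma$, the degree polynomial $\mathrm{dp}_\Gamma(v)\in\mathbb{Z}[x]$ is the polynomial in which the coefficient of $x^{i}$ is the number of neighbors of $v$ in $\Gamma$ having degree $i$ in $\Gamma$ ($\mathrm{dp}_\Gamma(v)=0$ if $v$ is isolated). The degree polynomial of the graph $\Gamma$ is $\mathrm{dp}(\Gamma)=\sum_{i\ge 0} t_i x^i$, where $t_i$ is the number of vertices of $\Gamma$ of degree $i$ (so $t_0$ counts isolated vertices). The join $G\vee H$ is the simple graph on $V(G)\cup V(H)$ whose edges are the edges of $G$, the edges of $H$, and all pairs $\{a,b\}$ with $a\in V(G)$, $b\in V(H)$. *)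

theory Defs
  imports "HOL-Computational_Algebra.Polynomial"
begin

definition simple_graph :: "'a set \<Rightarrow> ('a \<Rightarrow> 'a \<Rightarrow> bool) \<Rightarrow> bool" where
  "simple_graph V E \<longleftrightarrow> finite V \<and> (\<forall>x y. E x y \<longrightarrow> x \<in> V \<and> y \<in> V)
     \<and> (\<forall>x y. E x y \<longrightarrow> E y x) \<and> (\<forall>x. \<not> E x x)"

definition neighbors :: "'a set \<Rightarrow> ('a \<Rightarrow> 'a \<Rightarrow> bool) \<Rightarrow> 'a \<Rightarrow> 'a set" where
  "neighbors V E v = {w \<in> V. E v w}"

definition degree_in :: "'a set \<Rightarrow> ('a \<Rightarrow> 'a \<Rightarrow> bool) \<Rightarrow> 'a \<Rightarrow> nat" where
  "degree_in V E v = card (neighbors V E v)"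

definition dp_vertex :: "'a set \<Rightarrow> ('a \<Rightarrow> 'a \<Rightarrow> bool) \<Rightarrow> 'a \<Rightarrow> int poly" where
  "dp_vertex V E v = (\<Sum>w\<in>neighbors V E v. monom 1 (degree_in V E w))"

definition dp_graph :: "'a set \<Rightarrow> ('a \<Rightarrow> 'a \<Rightarrow> bool) \<Rightarrow> int poly" where
  "dp_graph V E = (\<Sum>v\<in>V. monom 1 (degree_in V E v))"

text \<open>Edge relation of the join G v H (vertex set VG \<union> VH).\<close>
definition join_edges :: "'a set \<Rightarrow> ('a \<Rightarrow> 'a \<Rightarrow> bool) \<Rightarrow> 'a set \<Rightarrow> ('a \<Rightarrow> 'a \<Rightarrow> bool)
    \<Rightarrow> 'a \<Rightarrow> 'a \<Rightarrow> bool" where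
  "join_edges VG EG VH EH a b \<longleftrightarrow> EG a b \<or> EH a b \<or> (a \<in> VG \<and> b \<in> VH) \<or> (a \<in> VH \<and> b \<in> VG)"

end

theory Submission
  imports Defs
begin

text \<open>In the join every vertex of G gains all of H as new neighbours, and vice versa, so
  degrees shift by the order of the other graph. Splitting the neighbourhood of u in the join
  into its G-neighbourhood and all of H, the first part contributes x^n2 dp_G(u) and
  the second x^n1 dp(H).\<close>

lemma neighbors_subset: "neighbors V E v \<subseteq> V"
  unfolding neighbors_def by blast

lemma finite_neighbors: "simple_graph V E \<Longrightarrow> finite (neighbors V E v)"
  unfolding simple_graph_def by (metis finite_subset neighbors_subset)

lemma join_edges_commute: "join_edges VG EG VH EH = join_edges VH EH VG EG"
  unfolding join_edges_def by blast

lemma neighbors_join_edges: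
  assumes "simple_graph VG EG" and "simple_graph VH EH"
    and "VG \<inter> VH = {}" and "w \<in> VG"
  shows "neighbors (VG \<union> VH) (join_edges VG EG VH EH) w = neighbors VG EG w \<union> VH"
  using assms unfolding neighbors_def join_edges_def simple_graph_def by blast

lemma degree_in_join_edges:
  assumes "simple_graph VG EG" and "simple_graph VH EH"
    and "VG \<inter> VH = {}" and "w \<in> VG"
  shows "degree_in (VG \<union> VH) (join_edges VG EG VH EH) w = degree_in VG EG w + card VH"
proof -
  have "neighbors VG EG w \<inter> VH = {}"
    using neighbors_subset[of VG EG w] assms(3) by blast
  moreover have "finite VH"
    using assms(2) unfolding simple_graph_def by simp
  ultimately show ?thesis
    unfolding degree_in_def neighbors_join_edges[OF assms]
    by (simp add: card_Un_disjoint finite_neighbors[OF assms(1)])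
qed

lemma sum_monom_shift:
  "(\<Sum>w\<in>A. monom (1::'b::comm_semiring_1) (f w + c)) = monom 1 c * (\<Sum>w\<in>A. monom 1 (f w))"
  unfolding sum_distrib_left by (simp add: mult_monom add.commute)

theorem theorem4p14:
  fixes VG VH :: "'a set" and EG EH :: "'a \<Rightarrow> 'a \<Rightarrow> bool" and u :: 'a
  assumes "simple_graph VG EG" and "simple_graph VH EH"
    and "VG \<inter> VH = {}" and "u \<in> VG"
  shows "dp_vertex (VG \<union> VH) (join_edges VG EG VH EH) u
           = monom 1 (card VH) * dp_vertex VG EG u + monom 1 (card VG) * dp_graph VH EH"
proof -
  let ?V = "VG \<union> VH" and ?E = "join_edges VG EG VH EH"
  have "finite VH"
    using assms(2) unfolding simple_graph_def by simp
  have "neighbors VG EG u \<inter> VH = {}"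
    using neighbors_subset[of VG EG u] assms(3) by blast
  have deg_G: "degree_in ?V ?E w = degree_in VG EG w + card VH" if "w \<in> neighbors VG EG u" for w
    using degree_in_join_edges[OF assms(1-3) subsetD[OF neighbors_subset that]] .
  have deg_H: "degree_in ?V ?E w = degree_in VH EH w + card VG" if "w \<in> VH" for w
  proof -
    have "VH \<inter> VG = {}"
      using assms(3) by blast
    from degree_in_join_edges[OF assms(2,1) this that] show ?thesis
      unfolding Un_commute[of VH VG] join_edges_commute[of VH] .
  qed
  have "dp_vertex ?V ?E u = (\<Sum>w\<in>neighbors VG EG u. monom 1 (degree_in ?V ?E w))
      + (\<Sum>w\<in>VH. monom 1 (degree_in ?V ?E w))"
    unfolding dp_vertex_def neighbors_join_edges[OF assms]
    using finite_neighbors[OF assms(1)] \<open>finite VH\<close> \<open>neighbors VG EG u \<inter> VH = {}\<close>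
    by (rule sum.union_disjoint)
  also have "\<dots> = (\<Sum>w\<in>neighbors VG EG u. monom 1 (degree_in VG EG w + card VH))
      + (\<Sum>w\<in>VH. monom 1 (degree_in VH EH w + card VG))"
    using deg_G deg_H by (intro arg_cong2[where f = "(+)"] sum.cong) simp_all
  finally show ?thesis
    unfolding dp_vertex_def dp_graph_def sum_monom_shift .
qed

end
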